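(* Let $B_1,\dots,B_n$ be independent real-valued service times with finite means $\mu_i$, each with a distribution symmetric around its mean, and put $X_i=B_i-\mu_i$. Fix a sequence $\tau\in\mathsf S_n$ and use the mean-based schedule. Then for each $k\in\{1,\dots,n-1\}$, $$\mathbb EW_{k+1}\le\mathbb E\bigl(X_{\tau(1)}+\cdots+X_{\tau(k)}\bigr)^++\mathbb E\bigl(X_{\tau(1)}+\cdots+X_{\tau(k-1)}\bigr)^+,$$ with an empty sum equal to $0$.
   Context: Under sequence $\tau$ ($\tau(i)$ the patient in slot $i$) and the mean-based schedule (interarrival time after patient $j$ equal to $\mu_j$), the waiting times are $W_1=0$, $W_{i+1}=(W_i+X_{\tau(i)})^+$ with $a^+=\max\{0,a\}$. *)

theory Defs
  imports "HOL-Probability.Probability" "HOL-Combinatorics.Permutations"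
begin

text \<open>Waiting times under sequence tau with mean-based schedule:
  W_1 = 0, W_(i+1) = max 0 (W_i + X (tau i)). Slots are numbered 1..n;
  the value at index 0 is an unused dummy (set to 0).\<close>
fun waiting :: "(nat \<Rightarrow> real) \<Rightarrow> (nat \<Rightarrow> nat) \<Rightarrow> nat \<Rightarrow> real" where
  "waiting X tau 0 = 0"
| "waiting X tau (Suc 0) = 0"
| "waiting X tau (Suc (Suc i)) = max 0 (waiting X tau (Suc i) + X (tau (Suc i)))"

end

theory Submission
  imports Defs
begin

(* Write S_m = X_tau(1) + ... + X_tau(m), and W_1 = 0, W_(m+1) = (W_m + X_tau(m))^+ for the
   waiting times, a random walk reflected at 0. The step Z = X_tau(m) is symmetric and
   independent of W_m and S_(m-1), so 2 E W_(m+1) = E (W_m + Z)^+ + E (W_m - Z)^+, and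
   conditioning on Z reduces the claim to an estimate at a fixed level v. Sums of independent
   symmetric variables are symmetric, whence E (S + b)^+ = b + E (S - b)^+ for b >= 0; by
   induction this yields the Levy-type bound E (W_(m+1) - c)^+ <= 2 E (S_m - c)^+ at every
   level c. Since W >= 0, (W + v)^+ + (W - v)^+ = W + |v| + (W - |v|)^+, and the bounds at the
   levels 0 and |v| give E W_(k+1) <= E S_k^+ + E S_(k-1)^+. *)

lemma (in prob_space) indep_sets_reindex:
  assumes indep: "indep_sets F (f ` I)" and inj: "inj_on f I"
  shows "indep_sets (\<lambda>i. F (f i)) I"
  unfolding indep_sets_def
proof (intro conjI ballI allI impI)
  show "F (f i) \<subseteq> events" if "i \<in> I" for i
    using indep that by (auto simp: indep_sets_def)
  fix J A assume J: "J \<subseteq> I" "J \<noteq> {}" "finite J" and A: "A \<in> (\<Pi> j\<in>J. F (f j))"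
  have inj_J: "inj_on f J" using inj J(1) by (rule inj_on_subset)
  define A' where "A' = (\<lambda>j. A (the_inv_into J f j))"
  have A'_f: "A' (f j) = A j" if "j \<in> J" for j
    using the_inv_into_f_f[OF inj_J that] by (simp add: A'_def)
  have "A' \<in> (\<Pi> j\<in>f ` J. F j)" using A by (auto simp: A'_f)
  moreover have "f ` J \<subseteq> f ` I" "f ` J \<noteq> {}" "finite (f ` J)" using J by auto
  ultimately have "prob (\<Inter>j\<in>f ` J. A' j) = (\<Prod>j\<in>f ` J. prob (A' j))"
    using indep unfolding indep_sets_def by blast
  then show "prob (\<Inter>j\<in>J. A j) = (\<Prod>j\<in>J. prob (A j))"
    by (simp add: prod.reindex[OF inj_J] A'_f cong: INF_cong)
qed

lemma (in prob_space) indep_vars_reindex: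
  assumes "indep_vars M' X (f ` I)" and "inj_on f I"
  shows "indep_vars (\<lambda>i. M' (f i)) (\<lambda>i. X (f i)) I"
  using assms indep_sets_reindex[of "\<lambda>j. {X j -` A \<inter> space M | A. A \<in> sets (M' j)}" f I]
  by (auto simp: indep_vars_def2)

lemma (in prob_space) indep_var_restrict_compose:
  assumes indep: "indep_vars (\<lambda>_. N) X I" and "A \<subseteq> I" "j \<in> I" "j \<notin> A"
    and g: "g \<in> measurable (\<Pi>\<^sub>M i\<in>A. N) L"
  shows "indep_var L (\<lambda>\<omega>. g (\<lambda>i\<in>A. X i \<omega>)) N (X j)"
proof -
  have "indep_var (\<Pi>\<^sub>M i\<in>A. N) (\<lambda>\<omega>. \<lambda>i\<in>A. X i \<omega>) (\<Pi>\<^sub>M i\<in>{j}. N) (\<lambda>\<omega>. \<lambda>i\<in>{j}. X i \<omega>)"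
    using assms by (intro indep_var_restrict[OF indep]) auto
  then have "indep_var L (g \<circ> (\<lambda>\<omega>. \<lambda>i\<in>A. X i \<omega>)) N ((\<lambda>f. f j) \<circ> (\<lambda>\<omega>. \<lambda>i\<in>{j}. X i \<omega>))"
    by (rule indep_var_compose) (use g in simp_all)
  then show ?thesis by (simp add: comp_def)
qed

lemma (in prob_space) indep_var_distr_pair_eq:
  assumes "indep_var S U T V" and "indep_var S U' T V'"
    and "distr M S U' = distr M S U" and "distr M T V' = distr M T V"
  shows "distr M (S \<Otimes>\<^sub>M T) (\<lambda>\<omega>. (U' \<omega>, V' \<omega>)) = distr M (S \<Otimes>\<^sub>M T) (\<lambda>\<omega>. (U \<omega>, V \<omega>))"
  using assms by (simp add: indep_var_distribution_eq)

lemma (in prob_space) nn_integral_indep_var: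
  assumes indep: "indep_var S U T V" and f: "f \<in> borel_measurable (S \<Otimes>\<^sub>M T)"
  shows "(\<integral>\<^sup>+\<omega>. f (U \<omega>, V \<omega>) \<partial>M) = (\<integral>\<^sup>+v. (\<integral>\<^sup>+\<omega>. f (U \<omega>, v) \<partial>M) \<partial>distr M T V)"
proof -
  have U: "random_variable S U" and V: "random_variable T V"
    and joint: "distr M S U \<Otimes>\<^sub>M distr M T V = distr M (S \<Otimes>\<^sub>M T) (\<lambda>\<omega>. (U \<omega>, V \<omega>))"
    using indep by (auto simp: indep_var_distribution_eq)
  interpret PU: prob_space "distr M S U" by (rule prob_space_distr) fact
  interpret PV: prob_space "distr M T V" by (rule prob_space_distr) fact
  interpret PUV: pair_prob_space "distr M S U" "distr M T V" ..
  have "(\<integral>\<^sup>+\<omega>. f (U \<omega>, V \<omega>) \<partial>M) = integral\<^sup>N (distr M S U \<Otimes>\<^sub>M distr M T V) f"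
    unfolding joint by (rule nn_integral_distr[symmetric]) (use U V f in auto)
  also have "\<dots> = (\<integral>\<^sup>+v. (\<integral>\<^sup>+u. f (u, v) \<partial>distr M S U) \<partial>distr M T V)"
    by (rule PUV.nn_integral_snd[symmetric]) (use f in simp)
  also have "\<dots> = (\<integral>\<^sup>+v. (\<integral>\<^sup>+\<omega>. f (U \<omega>, v) \<partial>M) \<partial>distr M T V)"
    by (intro nn_integral_cong nn_integral_distr) (use U f in auto)
  finally show ?thesis .
qed

lemma (in prob_space) nn_integral_indep_var_mono:
  assumes "indep_var S U T Z" and "indep_var S' U' T Z"
    and "f \<in> borel_measurable (S \<Otimes>\<^sub>M T)" and "g \<in> borel_measurable (S' \<Otimes>\<^sub>M T)"
    and "\<And>v. v \<in> space T \<Longrightarrow> (\<integral>\<^sup>+\<omega>. f (U \<omega>, v) \<partial>M) \<le> (\<integral>\<^sup>+\<omega>. g (U' \<omega>, v) \<partial>M)"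
  shows "(\<integral>\<^sup>+\<omega>. f (U \<omega>, Z \<omega>) \<partial>M) \<le> (\<integral>\<^sup>+\<omega>. g (U' \<omega>, Z \<omega>) \<partial>M)"
  using assms by (simp add: nn_integral_indep_var) (rule nn_integral_mono, simp)

definition (in prob_space) symmetric_rv :: "('a \<Rightarrow> real) \<Rightarrow> bool" where
  "symmetric_rv X \<longleftrightarrow> distr M borel X = distr M borel (\<lambda>\<omega>. - X \<omega>)"

lemma (in prob_space) indep_var_uminus:
  fixes V :: "'a \<Rightarrow> real"
  assumes "indep_var S U borel V"
  shows "indep_var S U borel (\<lambda>\<omega>. - V \<omega>)"
proof -
  have "indep_var S (id \<circ> U) borel (uminus \<circ> V)"
    by (rule indep_var_compose[OF assms]) measurable
  then show ?thesis by (simp add: comp_def)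
qed

lemma (in prob_space) nn_integral_indep_var_symmetric:
  assumes indep: "indep_var S U borel Z" and "symmetric_rv Z"
    and f: "f \<in> borel_measurable (S \<Otimes>\<^sub>M borel)"
  shows "(\<integral>\<^sup>+\<omega>. f (U \<omega>, - Z \<omega>) \<partial>M) = (\<integral>\<^sup>+\<omega>. f (U \<omega>, Z \<omega>) \<partial>M)"
proof -
  have U: "random_variable S U" and Z: "random_variable borel Z"
    using indep by (auto simp: indep_var_distribution_eq)
  have "(\<integral>\<^sup>+\<omega>. f (U \<omega>, - Z \<omega>) \<partial>M) = integral\<^sup>N (distr M (S \<Otimes>\<^sub>M borel) (\<lambda>\<omega>. (U \<omega>, - Z \<omega>))) f"
    by (rule nn_integral_distr[symmetric]) (use U Z f in auto)
  also have "distr M (S \<Otimes>\<^sub>M borel) (\<lambda>\<omega>. (U \<omega>, - Z \<omega>)) = distr M (S \<Otimes>\<^sub>M borel) (\<lambda>\<omega>. (U \<omega>, Z \<omega>))"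
    using assms by (intro indep_var_distr_pair_eq indep_var_uminus) (auto simp: symmetric_rv_def)
  also have "integral\<^sup>N \<dots> f = (\<integral>\<^sup>+\<omega>. f (U \<omega>, Z \<omega>) \<partial>M)"
    by (rule nn_integral_distr) (use U Z f in auto)
  finally show ?thesis .
qed

lemma (in prob_space) symmetric_rv_add:
  assumes indep: "indep_var borel U borel V" and "symmetric_rv U" "symmetric_rv V"
  shows "symmetric_rv (\<lambda>\<omega>. U \<omega> + V \<omega>)"
proof -
  have U: "random_variable borel U" and V: "random_variable borel V"
    using indep by (auto simp: indep_var_distribution_eq)
  have "indep_var borel (\<lambda>\<omega>. - U \<omega>) borel (\<lambda>\<omega>. - V \<omega>)"
    using indep_var_compose[OF indep, of uminus borel uminus borel] by (simp add: comp_def)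
  then have "distr M (borel \<Otimes>\<^sub>M borel) (\<lambda>\<omega>. (- U \<omega>, - V \<omega>)) = distr M (borel \<Otimes>\<^sub>M borel) (\<lambda>\<omega>. (U \<omega>, V \<omega>))"
    using assms by (intro indep_var_distr_pair_eq) (auto simp: symmetric_rv_def)
  then have "distr (distr M (borel \<Otimes>\<^sub>M borel) (\<lambda>\<omega>. (- U \<omega>, - V \<omega>))) borel (\<lambda>(x, y). x + y)
      = distr (distr M (borel \<Otimes>\<^sub>M borel) (\<lambda>\<omega>. (U \<omega>, V \<omega>))) borel (\<lambda>(x, y). x + y)"
    by simp
  then show ?thesis
    using U V by (simp add: distr_distr comp_def symmetric_rv_def)
qed

lemma (in prob_space) integral_symmetric_rv:
  fixes g :: "real \<Rightarrow> real"
  assumes "symmetric_rv X" and X: "random_variable borel X" and g: "g \<in> borel_measurable borel"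
  shows "(\<integral>\<omega>. g (X \<omega>) \<partial>M) = (\<integral>\<omega>. g (- X \<omega>) \<partial>M)"
proof -
  have "(\<integral>\<omega>. g (X \<omega>) \<partial>M) = integral\<^sup>L (distr M borel X) g"
    by (rule integral_distr[symmetric]) (use X g in auto)
  also have "\<dots> = integral\<^sup>L (distr M borel (\<lambda>\<omega>. - X \<omega>)) g"
    using \<open>symmetric_rv X\<close> by (simp add: symmetric_rv_def)
  also have "\<dots> = (\<integral>\<omega>. g (- X \<omega>) \<partial>M)"
    by (rule integral_distr) (use X g in auto)
  finally show ?thesis .
qed

lemma (in prob_space) nn_integral_pos_part_shift_symmetric:
  assumes "symmetric_rv X" and X: "integrable M X" and "b \<ge> 0"
  shows "(\<integral>\<^sup>+\<omega>. ennreal (max 0 (X \<omega> + b)) \<partial>M) = ennreal b + (\<integral>\<^sup>+\<omega>. ennreal (max 0 (X \<omega> - b)) \<partial>M)"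
proof -
  have [measurable]: "X \<in> borel_measurable M" using X by auto
  have integrable_pos_part: "integrable M (\<lambda>\<omega>. max 0 (X \<omega> + c))" for c
    using X by simp
  have "(\<integral>\<omega>. X \<omega> \<partial>M) = (\<integral>\<omega>. - X \<omega> \<partial>M)"
    by (rule integral_symmetric_rv[OF \<open>symmetric_rv X\<close>]) simp_all
  then have mean_zero: "(\<integral>\<omega>. X \<omega> \<partial>M) = 0"
    using integral_minus[of M X] by linarith
  have "(\<integral>\<omega>. max 0 (X \<omega> + b) \<partial>M) = (\<integral>\<omega>. X \<omega> + (b + max 0 (- X \<omega> - b)) \<partial>M)"
    by (intro Bochner_Integration.integral_cong) auto
  also have "\<dots> = (\<integral>\<omega>. X \<omega> \<partial>M) + (\<integral>\<omega>. b + max 0 (- X \<omega> - b) \<partial>M)"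
    using X by (intro Bochner_Integration.integral_add) simp_all
  also have "\<dots> = b + (\<integral>\<omega>. max 0 (- X \<omega> - b) \<partial>M)"
    using X by (simp add: mean_zero prob_space)
  also have "(\<integral>\<omega>. max 0 (- X \<omega> - b) \<partial>M) = (\<integral>\<omega>. max 0 (X \<omega> - b) \<partial>M)"
    using integral_symmetric_rv[OF \<open>symmetric_rv X\<close>, of "\<lambda>x. max 0 (x - b)"] by simp
  finally have integral_eq: "(\<integral>\<omega>. max 0 (X \<omega> + b) \<partial>M) = b + (\<integral>\<omega>. max 0 (X \<omega> - b) \<partial>M)" .
  have "(\<integral>\<^sup>+\<omega>. ennreal (max 0 (X \<omega> + b)) \<partial>M) = ennreal (\<integral>\<omega>. max 0 (X \<omega> + b) \<partial>M)"
    using integrable_pos_part[of b] by (intro nn_integral_eq_integral) auto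
  also have "\<dots> = ennreal b + ennreal (\<integral>\<omega>. max 0 (X \<omega> - b) \<partial>M)"
    unfolding integral_eq using \<open>b \<ge> 0\<close> by (intro ennreal_plus) auto
  also have "ennreal (\<integral>\<omega>. max 0 (X \<omega> - b) \<partial>M) = (\<integral>\<^sup>+\<omega>. ennreal (max 0 (X \<omega> - b)) \<partial>M)"
    using integrable_pos_part[of "-b"] by (intro nn_integral_eq_integral[symmetric]) auto
  finally show ?thesis .
qed

lemma (in prob_space) excess_bound_negative_levels:
  assumes W: "W \<in> borel_measurable M" "\<And>\<omega>. W \<omega> \<ge> 0"
    and S: "symmetric_rv S" "integrable M S"
    and bound: "\<And>a. a \<ge> 0 \<Longrightarrow>
      (\<integral>\<^sup>+\<omega>. ennreal (max 0 (W \<omega> - a)) \<partial>M) \<le> 2 * (\<integral>\<^sup>+\<omega>. ennreal (max 0 (S \<omega> - a)) \<partial>M)"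
  shows "(\<integral>\<^sup>+\<omega>. ennreal (max 0 (W \<omega> - c)) \<partial>M) \<le> 2 * (\<integral>\<^sup>+\<omega>. ennreal (max 0 (S \<omega> - c)) \<partial>M)"
proof (cases "c \<ge> 0")
  case True
  then show ?thesis by (rule bound)
next
  case False
  define b where "b = - c"
  have "b \<ge> 0" using False by (simp add: b_def)
  have [measurable]: "S \<in> borel_measurable M" using S by auto
  have "(\<integral>\<^sup>+\<omega>. ennreal (max 0 (W \<omega> - c)) \<partial>M) \<le> (\<integral>\<^sup>+\<omega>. ennreal (2 * b) + ennreal (max 0 (W \<omega> - b)) \<partial>M)"
  proof (rule nn_integral_mono)
    fix \<omega>
    have "max 0 (W \<omega> - c) \<le> 2 * b + max 0 (W \<omega> - b)"
      using W(2)[of \<omega>] False by (auto simp: b_def max_def)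
    then have "ennreal (max 0 (W \<omega> - c)) \<le> ennreal (2 * b + max 0 (W \<omega> - b))"
      by (rule ennreal_leI)
    also have "\<dots> = ennreal (2 * b) + ennreal (max 0 (W \<omega> - b))"
      using \<open>b \<ge> 0\<close> by (intro ennreal_plus) auto
    finally show "ennreal (max 0 (W \<omega> - c)) \<le> ennreal (2 * b) + ennreal (max 0 (W \<omega> - b))" .
  qed
  also have "\<dots> = ennreal (2 * b) + (\<integral>\<^sup>+\<omega>. ennreal (max 0 (W \<omega> - b)) \<partial>M)"
    using W(1) by (subst nn_integral_add) (auto simp: emeasure_space_1)
  also have "\<dots> \<le> ennreal (2 * b) + 2 * (\<integral>\<^sup>+\<omega>. ennreal (max 0 (S \<omega> - b)) \<partial>M)"
    using bound[OF \<open>b \<ge> 0\<close>] by (rule add_left_mono)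
  also have "\<dots> = 2 * (ennreal b + (\<integral>\<^sup>+\<omega>. ennreal (max 0 (S \<omega> - b)) \<partial>M))"
    using \<open>b \<ge> 0\<close> by (simp add: distrib_left ennreal_mult)
  also have "\<dots> = 2 * (\<integral>\<^sup>+\<omega>. ennreal (max 0 (S \<omega> + b)) \<partial>M)"
    unfolding nn_integral_pos_part_shift_symmetric[OF S \<open>b \<ge> 0\<close>] ..
  finally show ?thesis by (simp add: b_def)
qed

lemma (in prob_space) nn_integral_two_sided_pos_part_le:
  assumes W: "W \<in> borel_measurable M" "\<And>\<omega>. W \<omega> \<ge> 0"
    and S: "symmetric_rv S" "integrable M S"
    and bound: "\<And>a. a \<ge> 0 \<Longrightarrow>
      (\<integral>\<^sup>+\<omega>. ennreal (max 0 (W \<omega> - a)) \<partial>M) \<le> 2 * (\<integral>\<^sup>+\<omega>. ennreal (max 0 (S \<omega> - a)) \<partial>M)"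
  shows "(\<integral>\<^sup>+\<omega>. ennreal (max 0 (W \<omega> + v)) + ennreal (max 0 (W \<omega> - v)) \<partial>M)
    \<le> (\<integral>\<^sup>+\<omega>. ennreal (max 0 (S \<omega> + v)) + ennreal (max 0 (S \<omega> - v)) + 2 * ennreal (max 0 (S \<omega>)) \<partial>M)"
proof -
  have [measurable]: "S \<in> borel_measurable M" using S by auto
  note W(1)[measurable]
  have "(\<integral>\<^sup>+\<omega>. ennreal (max 0 (W \<omega> + v)) + ennreal (max 0 (W \<omega> - v)) \<partial>M)
      = (\<integral>\<^sup>+\<omega>. ennreal (max 0 (W \<omega> - 0)) + ennreal \<bar>v\<bar> + ennreal (max 0 (W \<omega> - \<bar>v\<bar>)) \<partial>M)"
  proof (rule nn_integral_cong)
    fix \<omega>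
    have "max 0 (W \<omega> + v) + max 0 (W \<omega> - v) = max 0 (W \<omega> - 0) + \<bar>v\<bar> + max 0 (W \<omega> - \<bar>v\<bar>)"
      using W(2)[of \<omega>] by (auto simp: max_def abs_if)
    then show "ennreal (max 0 (W \<omega> + v)) + ennreal (max 0 (W \<omega> - v))
        = ennreal (max 0 (W \<omega> - 0)) + ennreal \<bar>v\<bar> + ennreal (max 0 (W \<omega> - \<bar>v\<bar>))"
      by (simp only: ennreal_plus[symmetric] max.cobounded1 abs_ge_zero add_nonneg_nonneg)
  qed
  also have "\<dots> = (\<integral>\<^sup>+\<omega>. ennreal (max 0 (W \<omega> - 0)) \<partial>M) + ennreal \<bar>v\<bar>
      + (\<integral>\<^sup>+\<omega>. ennreal (max 0 (W \<omega> - \<bar>v\<bar>)) \<partial>M)"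
    by (simp add: nn_integral_add emeasure_space_1)
  also have "\<dots> \<le> 2 * (\<integral>\<^sup>+\<omega>. ennreal (max 0 (S \<omega> - 0)) \<partial>M) + ennreal \<bar>v\<bar>
      + 2 * (\<integral>\<^sup>+\<omega>. ennreal (max 0 (S \<omega> - \<bar>v\<bar>)) \<partial>M)"
    by (intro add_mono bound order_refl) auto
  also have "\<dots> = (ennreal \<bar>v\<bar> + (\<integral>\<^sup>+\<omega>. ennreal (max 0 (S \<omega> - \<bar>v\<bar>)) \<partial>M))
      + (\<integral>\<^sup>+\<omega>. ennreal (max 0 (S \<omega> - \<bar>v\<bar>)) \<partial>M) + 2 * (\<integral>\<^sup>+\<omega>. ennreal (max 0 (S \<omega>)) \<partial>M)"
    by (simp add: mult_2 ac_simps)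
  also have "\<dots> = (\<integral>\<^sup>+\<omega>. ennreal (max 0 (S \<omega> + \<bar>v\<bar>)) \<partial>M) + (\<integral>\<^sup>+\<omega>. ennreal (max 0 (S \<omega> - \<bar>v\<bar>)) \<partial>M)
      + 2 * (\<integral>\<^sup>+\<omega>. ennreal (max 0 (S \<omega>)) \<partial>M)"
    unfolding nn_integral_pos_part_shift_symmetric[OF S abs_ge_zero] ..
  also have "\<dots> = (\<integral>\<^sup>+\<omega>. ennreal (max 0 (S \<omega> + v)) \<partial>M) + (\<integral>\<^sup>+\<omega>. ennreal (max 0 (S \<omega> - v)) \<partial>M)
      + 2 * (\<integral>\<^sup>+\<omega>. ennreal (max 0 (S \<omega>)) \<partial>M)"
    by (cases "v \<ge> 0") (simp_all add: ac_simps)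
  also have "\<dots> = (\<integral>\<^sup>+\<omega>. ennreal (max 0 (S \<omega> + v)) + ennreal (max 0 (S \<omega> - v)) + 2 * ennreal (max 0 (S \<omega>)) \<partial>M)"
    by (simp add: nn_integral_add nn_integral_cmult)
  finally show ?thesis .
qed

lemma waiting_nonneg: "waiting X tau m \<ge> 0"
  by (induction X tau m rule: waiting.induct) auto

lemma waiting_reindex: "waiting X tau m = waiting (\<lambda>i. X (tau i)) id m"
  by (induction X tau m rule: waiting.induct) auto

lemma waiting_cong: "(\<And>i. i \<in> {1..m} \<Longrightarrow> X i = X' i) \<Longrightarrow> waiting X id (Suc m) = waiting X' id (Suc m)"
  by (induction m) auto

lemma measurable_waiting:
  "{1..m} \<subseteq> A \<Longrightarrow> (\<lambda>x. waiting x id (Suc m)) \<in> borel_measurable (\<Pi>\<^sub>M i\<in>A. borel)"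
proof (induction m)
  case (Suc m)
  then have "{1..m} \<subseteq> A" "Suc m \<in> A" by auto
  with Suc.IH show ?case by simp
qed simp

locale indep_symmetric_walk = prob_space +
  fixes Y :: "nat \<Rightarrow> 'a \<Rightarrow> real" and N :: nat
  assumes indep_steps: "indep_vars (\<lambda>_. borel) Y {1..N}"
    and integrable_step: "\<And>i. i \<in> {1..N} \<Longrightarrow> integrable M (Y i)"
    and symmetric_step: "\<And>i. i \<in> {1..N} \<Longrightarrow> symmetric_rv (Y i)"
begin

definition walk :: "nat \<Rightarrow> 'a \<Rightarrow> real" where
  "walk m \<omega> = (\<Sum>i=1..m. Y i \<omega>)"

definition reflected_walk :: "nat \<Rightarrow> 'a \<Rightarrow> real" where
  "reflected_walk m \<omega> = waiting (\<lambda>i. Y i \<omega>) id (Suc m)"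

lemma walk_0 [simp]: "walk 0 \<omega> = 0"
  by (simp add: walk_def)

lemma walk_Suc: "walk (Suc m) \<omega> = walk m \<omega> + Y (Suc m) \<omega>"
  by (simp add: walk_def)

lemma reflected_walk_0 [simp]: "reflected_walk 0 \<omega> = 0"
  by (simp add: reflected_walk_def)

lemma reflected_walk_Suc: "reflected_walk (Suc m) \<omega> = max 0 (reflected_walk m \<omega> + Y (Suc m) \<omega>)"
  by (simp add: reflected_walk_def)

lemma reflected_walk_nonneg: "reflected_walk m \<omega> \<ge> 0"
  by (simp add: reflected_walk_def waiting_nonneg)

lemma reflected_walk_restrict: "reflected_walk m \<omega> = waiting (\<lambda>i\<in>{1..m}. Y i \<omega>) id (Suc m)"
  unfolding reflected_walk_def by (rule waiting_cong) simp

lemma walk_restrict: "walk m \<omega> = (\<Sum>i=1..m. (\<lambda>i\<in>{1..m}. Y i \<omega>) i)"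
  unfolding walk_def by (rule sum.cong) auto

lemma borel_measurable_step: "i \<in> {1..N} \<Longrightarrow> Y i \<in> borel_measurable M"
  using integrable_step by blast

lemma borel_measurable_walk: "m \<le> N \<Longrightarrow> walk m \<in> borel_measurable M"
  unfolding walk_def[abs_def] by (intro borel_measurable_sum borel_measurable_step) auto

lemma integrable_walk: "m \<le> N \<Longrightarrow> integrable M (walk m)"
  unfolding walk_def[abs_def] by (intro Bochner_Integration.integrable_sum integrable_step) auto

lemma borel_measurable_reflected_walk: "m \<le> N \<Longrightarrow> reflected_walk m \<in> borel_measurable M"
  unfolding reflected_walk_restrict[abs_def]
  by (rule measurable_compose[OF measurable_restrict measurable_waiting])
     (auto intro: borel_measurable_step)

lemma indep_var_walk_step: "Suc m \<le> N \<Longrightarrow> indep_var borel (walk m) borel (Y (Suc m))"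
  unfolding walk_restrict[abs_def]
  by (rule indep_var_restrict_compose[OF indep_steps]) auto

lemma indep_var_reflected_walk_step:
  "Suc m \<le> N \<Longrightarrow> indep_var borel (reflected_walk m) borel (Y (Suc m))"
  unfolding reflected_walk_restrict[abs_def]
  by (rule indep_var_restrict_compose[OF indep_steps _ _ _ measurable_waiting]) auto

lemma symmetric_walk: "m \<le> N \<Longrightarrow> symmetric_rv (walk m)"
proof (induction m)
  case 0
  then show ?case by (simp add: symmetric_rv_def)
next
  case (Suc m)
  then have "symmetric_rv (\<lambda>\<omega>. walk m \<omega> + Y (Suc m) \<omega>)"
    by (intro symmetric_rv_add indep_var_walk_step symmetric_step) auto
  then show ?case by (simp add: walk_Suc[abs_def])
qed

lemma reflected_walk_excess_le:
  assumes "m \<le> N"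
  shows "(\<integral>\<^sup>+\<omega>. ennreal (max 0 (reflected_walk m \<omega> - c)) \<partial>M)
    \<le> 2 * (\<integral>\<^sup>+\<omega>. ennreal (max 0 (walk m \<omega> - c)) \<partial>M)"
  using assms
proof (induction m arbitrary: c)
  case 0
  show ?case by (simp add: mult_2 add_increasing)
next
  case (Suc m)
  then have "m \<le> N" and "Suc m \<in> {1..N}" by simp_all
  note [measurable] = borel_measurable_walk[OF \<open>m \<le> N\<close>] borel_measurable_reflected_walk[OF \<open>m \<le> N\<close>]
    borel_measurable_step[OF \<open>Suc m \<in> {1..N}\<close>]
  have step_le: "(\<integral>\<^sup>+\<omega>. ennreal (max 0 (reflected_walk m \<omega> + v - a)) \<partial>M)
      \<le> (\<integral>\<^sup>+\<omega>. 2 * ennreal (max 0 (walk m \<omega> + v - a)) \<partial>M)" for v a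
  proof -
    have "(\<integral>\<^sup>+\<omega>. ennreal (max 0 (reflected_walk m \<omega> + v - a)) \<partial>M)
        \<le> 2 * (\<integral>\<^sup>+\<omega>. ennreal (max 0 (walk m \<omega> - (a - v))) \<partial>M)"
      using Suc.IH[OF \<open>m \<le> N\<close>, of "a - v"] by (simp add: algebra_simps)
    also have "\<dots> = (\<integral>\<^sup>+\<omega>. 2 * ennreal (max 0 (walk m \<omega> + v - a)) \<partial>M)"
      by (subst nn_integral_cmult) (measurable, simp add: algebra_simps)
    finally show ?thesis .
  qed
  show ?case
  proof (rule excess_bound_negative_levels)
    fix a :: real assume "a \<ge> 0"
    have "(\<integral>\<^sup>+\<omega>. ennreal (max 0 (reflected_walk (Suc m) \<omega> - a)) \<partial>M)
        = (\<integral>\<^sup>+\<omega>. ennreal (max 0 (reflected_walk m \<omega> + Y (Suc m) \<omega> - a)) \<partial>M)"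
      using \<open>a \<ge> 0\<close> by (intro nn_integral_cong) (auto simp: reflected_walk_Suc max_def)
    also have "\<dots> \<le> (\<integral>\<^sup>+\<omega>. 2 * ennreal (max 0 (walk m \<omega> + Y (Suc m) \<omega> - a)) \<partial>M)"
      using nn_integral_indep_var_mono[OF indep_var_reflected_walk_step[OF Suc.prems]
          indep_var_walk_step[OF Suc.prems],
          of "\<lambda>(u, v). ennreal (max 0 (u + v - a))" "\<lambda>(u, v). 2 * ennreal (max 0 (u + v - a))"]
        step_le
      by simp
    also have "\<dots> = 2 * (\<integral>\<^sup>+\<omega>. ennreal (max 0 (walk (Suc m) \<omega> - a)) \<partial>M)"
      by (subst nn_integral_cmult) (measurable, simp add: walk_Suc)
    finally show "(\<integral>\<^sup>+\<omega>. ennreal (max 0 (reflected_walk (Suc m) \<omega> - a)) \<partial>M)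
        \<le> 2 * (\<integral>\<^sup>+\<omega>. ennreal (max 0 (walk (Suc m) \<omega> - a)) \<partial>M)" .
  qed (use Suc.prems in \<open>auto intro: borel_measurable_reflected_walk reflected_walk_nonneg symmetric_walk integrable_walk\<close>)
qed

lemma nn_integral_reflected_walk_le:
  assumes "Suc m \<le> N"
  shows "(\<integral>\<^sup>+\<omega>. ennreal (reflected_walk (Suc m) \<omega>) \<partial>M)
    \<le> (\<integral>\<^sup>+\<omega>. ennreal (max 0 (walk (Suc m) \<omega>)) \<partial>M) + (\<integral>\<^sup>+\<omega>. ennreal (max 0 (walk m \<omega>)) \<partial>M)"
proof -
  let ?W = "reflected_walk m" and ?S = "walk m" and ?Z = "Y (Suc m)"
  have "m \<le> N" and "Suc m \<in> {1..N}" using assms by simp_all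
  note [measurable] = borel_measurable_walk[OF \<open>m \<le> N\<close>] borel_measurable_reflected_walk[OF \<open>m \<le> N\<close>]
    borel_measurable_step[OF \<open>Suc m \<in> {1..N}\<close>]
  note indep_W = indep_var_reflected_walk_step[OF assms] and indep_S = indep_var_walk_step[OF assms]
  have level_le: "(\<integral>\<^sup>+\<omega>. ennreal (max 0 (?W \<omega> + v)) + ennreal (max 0 (?W \<omega> - v)) \<partial>M)
      \<le> (\<integral>\<^sup>+\<omega>. ennreal (max 0 (?S \<omega> + v)) + ennreal (max 0 (?S \<omega> - v)) + 2 * ennreal (max 0 (?S \<omega>)) \<partial>M)"
    for v
    by (rule nn_integral_two_sided_pos_part_le[OF borel_measurable_reflected_walk reflected_walk_nonneg
          symmetric_walk integrable_walk reflected_walk_excess_le])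
      (use \<open>m \<le> N\<close> in simp_all)
  have "2 * (\<integral>\<^sup>+\<omega>. ennreal (reflected_walk (Suc m) \<omega>) \<partial>M)
      = (\<integral>\<^sup>+\<omega>. ennreal (max 0 (?W \<omega> + ?Z \<omega>)) \<partial>M) + (\<integral>\<^sup>+\<omega>. ennreal (max 0 (?W \<omega> - ?Z \<omega>)) \<partial>M)"
    using nn_integral_indep_var_symmetric[OF indep_W symmetric_step, of "\<lambda>(u, v). ennreal (max 0 (u + v))"]
      assms
    by (simp add: mult_2 reflected_walk_Suc)
  also have "\<dots> = (\<integral>\<^sup>+\<omega>. ennreal (max 0 (?W \<omega> + ?Z \<omega>)) + ennreal (max 0 (?W \<omega> - ?Z \<omega>)) \<partial>M)"
    by (rule nn_integral_add[symmetric]) measurable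
  also have "\<dots> \<le> (\<integral>\<^sup>+\<omega>. ennreal (max 0 (?S \<omega> + ?Z \<omega>)) + ennreal (max 0 (?S \<omega> - ?Z \<omega>))
      + 2 * ennreal (max 0 (?S \<omega>)) \<partial>M)"
    using nn_integral_indep_var_mono[OF indep_W indep_S,
        of "\<lambda>(u, v). ennreal (max 0 (u + v)) + ennreal (max 0 (u - v))"
           "\<lambda>(u, v). ennreal (max 0 (u + v)) + ennreal (max 0 (u - v)) + 2 * ennreal (max 0 u)"]
      level_le
    by simp
  also have "\<dots> = (\<integral>\<^sup>+\<omega>. ennreal (max 0 (?S \<omega> + ?Z \<omega>)) \<partial>M) + (\<integral>\<^sup>+\<omega>. ennreal (max 0 (?S \<omega> - ?Z \<omega>)) \<partial>M)
      + 2 * (\<integral>\<^sup>+\<omega>. ennreal (max 0 (?S \<omega>)) \<partial>M)"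
    by (simp add: nn_integral_add nn_integral_cmult)
  also have "\<dots> = 2 * ((\<integral>\<^sup>+\<omega>. ennreal (max 0 (walk (Suc m) \<omega>)) \<partial>M) + (\<integral>\<^sup>+\<omega>. ennreal (max 0 (?S \<omega>)) \<partial>M))"
    using nn_integral_indep_var_symmetric[OF indep_S symmetric_step, of "\<lambda>(u, v). ennreal (max 0 (u + v))"]
      assms
    by (simp add: mult_2 walk_Suc distrib_left)
  finally show ?thesis
    by (rule ennreal_mult_le_mult_iff[THEN iffD1, rotated 2]) simp_all
qed

lemma integral_reflected_walk_le:
  assumes "Suc m \<le> N"
  shows "(\<integral>\<omega>. reflected_walk (Suc m) \<omega> \<partial>M)
    \<le> (\<integral>\<omega>. max 0 (walk (Suc m) \<omega>) \<partial>M) + (\<integral>\<omega>. max 0 (walk m \<omega>) \<partial>M)"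
proof -
  have nn_integral_pos_part: "(\<integral>\<^sup>+\<omega>. ennreal (max 0 (walk j \<omega>)) \<partial>M) = ennreal (\<integral>\<omega>. max 0 (walk j \<omega>) \<partial>M)"
    if "j \<le> N" for j
    using integrable_walk[OF that] by (intro nn_integral_eq_integral integrable_max) auto
  let ?bound = "(\<integral>\<omega>. max 0 (walk (Suc m) \<omega>) \<partial>M) + (\<integral>\<omega>. max 0 (walk m \<omega>) \<partial>M)"
  have "?bound \<ge> 0" by (intro add_nonneg_nonneg integral_nonneg_AE) auto
  have "(\<integral>\<^sup>+\<omega>. ennreal (reflected_walk (Suc m) \<omega>) \<partial>M)
      \<le> ennreal (\<integral>\<omega>. max 0 (walk (Suc m) \<omega>) \<partial>M) + ennreal (\<integral>\<omega>. max 0 (walk m \<omega>) \<partial>M)"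
    using nn_integral_reflected_walk_le[OF assms] assms by (simp only: nn_integral_pos_part)
  also have "\<dots> = ennreal ?bound"
    by (intro ennreal_plus[symmetric] integral_nonneg_AE) auto
  finally have nn_le: "(\<integral>\<^sup>+\<omega>. ennreal (reflected_walk (Suc m) \<omega>) \<partial>M) \<le> ennreal ?bound" .
  have "(\<integral>\<^sup>+\<omega>. ennreal (reflected_walk (Suc m) \<omega>) \<partial>M) < top"
    by (rule le_less_trans[OF nn_le ennreal_less_top])
  then have "integrable M (reflected_walk (Suc m))"
    using borel_measurable_reflected_walk[OF assms] by (intro integrableI_nonneg) (auto simp: reflected_walk_nonneg)
  then have "(\<integral>\<^sup>+\<omega>. ennreal (reflected_walk (Suc m) \<omega>) \<partial>M) = ennreal (\<integral>\<omega>. reflected_walk (Suc m) \<omega> \<partial>M)"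
    by (intro nn_integral_eq_integral) (auto simp: reflected_walk_nonneg)
  with nn_le \<open>?bound \<ge> 0\<close> show ?thesis
    by (simp only: ennreal_le_iff)
qed

end

theorem lemma3p3:
  fixes M :: "'a measure" and B :: "nat \<Rightarrow> 'a \<Rightarrow> real"
    and n k :: nat and tau :: "nat \<Rightarrow> nat"
  assumes "prob_space M"
    and "prob_space.indep_vars M (\<lambda>_. borel) B {1..n}"
    and "\<And>i. i \<in> {1..n} \<Longrightarrow> integrable M (B i)"
    and "\<And>i. i \<in> {1..n} \<Longrightarrow>
           distr M borel (\<lambda>\<omega>. B i \<omega> - integral\<^sup>L M (B i))
         = distr M borel (\<lambda>\<omega>. - (B i \<omega> - integral\<^sup>L M (B i)))"
    and "tau permutes {1..n}"
    and "1 \<le> k" and "k \<le> n - 1"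
  shows "integral\<^sup>L M (\<lambda>\<omega>. waiting (\<lambda>j. B j \<omega> - integral\<^sup>L M (B j)) tau (k + 1))
         \<le> integral\<^sup>L M (\<lambda>\<omega>. max 0 (\<Sum>i=1..k. B (tau i) \<omega> - integral\<^sup>L M (B (tau i))))
          + integral\<^sup>L M (\<lambda>\<omega>. max 0 (\<Sum>i=1..k-1. B (tau i) \<omega> - integral\<^sup>L M (B (tau i))))"
proof -
  interpret prob_space M by fact
  define X where "X = (\<lambda>j \<omega>. B j \<omega> - integral\<^sup>L M (B j))"
  obtain m where k: "k = Suc m" using \<open>1 \<le> k\<close> by (cases k) auto
  have "{1..k} \<subseteq> {1..n}" using assms(7) by auto
  then have tau_image: "tau ` {1..k} \<subseteq> {1..n}"
    using permutes_image[OF assms(5)] by (metis image_mono)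
  have "indep_vars (\<lambda>_. borel) X {1..n}"
    unfolding X_def by (rule indep_vars_compose2[OF assms(2)]) simp
  from indep_vars_reindex[OF indep_vars_subset[OF this tau_image] permutes_inj_on[OF assms(5)]]
  have indep: "indep_vars (\<lambda>_. borel) (\<lambda>i. X (tau i)) {1..k}" by simp
  have "integrable M (X (tau i))" and "symmetric_rv (X (tau i))" if "i \<in> {1..k}" for i
    using assms(3,4)[OF subsetD[OF tau_image imageI[OF that]]] by (auto simp: X_def symmetric_rv_def)
  with indep interpret indep_symmetric_walk M "\<lambda>i. X (tau i)" k
    by unfold_locales simp_all
  have waiting_eq: "waiting (\<lambda>j. B j \<omega> - integral\<^sup>L M (B j)) tau (k + 1) = reflected_walk k \<omega>" for \<omega>
    unfolding reflected_walk_def by (subst waiting_reindex) (simp add: X_def)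
  have sum_eq: "(\<Sum>i=1..j. B (tau i) \<omega> - integral\<^sup>L M (B (tau i))) = walk j \<omega>" for j \<omega>
    unfolding walk_def by (simp add: X_def)
  show ?thesis
    unfolding waiting_eq sum_eq using integral_reflected_walk_le[of m] by (simp add: k)
qed

end
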